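(* Under the standing assumptions below, if $x$ is sufficiently large (in terms of $\epsilon$), then $U+V\subseteq Q$, where the sum is taken modulo $36$.
   Context: Standing assumptions and notation: $\epsilon>0$ is fixed, $\delta_0=\frac14-\frac{2}{\pi^2}$, and $A\subseteq[1,x]\cap\mathbb{N}$ is a set with $|A|>(\delta_0+\epsilon)x$ such that $A+A=\{a+b:a,b\in A\}$ contains no squarefree integer, and $A$ is not a subset of $4\mathbb{N}$, nor of $9\mathbb{N}$, nor of $\{n\in\mathbb{N}:n\equiv 2\pmod 4\}$. For $a\in\{0,\dots,35\}$ put $\delta_a=\frac{36\cdot\#\{n\in A: n\equiv a\pmod{36}\}}{x}$. Let $U$ be the set of residues $a\bmod 36$ with $\delta_a>1-\frac{9}{\pi^2}+\epsilon/100$, let $V$ be the set of residues $a\bmod 36$ with $\delta_a>0$, and let $Q=\{0,4,8,9,12,16,18,20,24,27,28,32\}$ (the residue classes mod $36$ containing no squarefree integers). *)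

theory Defs
  imports Complex_Main "HOL-Computational_Algebra.Squarefree"
begin

definition delta0 :: real where
  "delta0 = 1/4 - 2 / pi^2"

definition dens :: "real \<Rightarrow> nat set \<Rightarrow> nat \<Rightarrow> real" where
  "dens x A a = 36 * real (card {n \<in> A. n mod 36 = a}) / x"

definition Uset :: "real \<Rightarrow> real \<Rightarrow> nat set \<Rightarrow> nat set" where
  "Uset \<epsilon> x A = {a. a < 36 \<and> dens x A a > 1 - 9 / pi^2 + \<epsilon> / 100}"

definition Vset :: "real \<Rightarrow> nat set \<Rightarrow> nat set" where
  "Vset x A = {a. a < 36 \<and> dens x A a > 0}"

definition Qset :: "nat set" where
  "Qset = {0,4,8,9,12,16,18,20,24,27,28,32}"

end

theory Submission
  imports Defs "HOL-Analysis.Analysis" "HOL-Number_Theory.Cong"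
begin

text \<open>
  Let \<open>N = \<lfloor>x\<rfloor>\<close>, \<open>u \<in> U\<close>, \<open>v \<in> V\<close>, and pick \<open>b \<in> A\<close> with \<open>b \<equiv> v (mod 36)\<close>.  Translation
  \<open>a \<mapsto> a + b\<close> maps the elements of \<open>A\<close> in the class \<open>u\<close> injectively to non-squarefree
  integers of \<open>(b, b + N]\<close> in the class \<open>r = u + v\<close>.  If \<open>r \<notin> Q\<close>, i.e. \<open>4 \<nmid> r\<close> and \<open>9 \<nmid> r\<close>,
  each of them is divisible by \<open>p\<^sup>2\<close> for a prime \<open>p \<ge> 5\<close>.  Sieving the progression by the primes
  \<open>5 \<le> p \<le> P\<close>, and bounding the multiples of \<open>d\<^sup>2\<close> for \<open>P < d \<le> \<surd>(2N)\<close> trivially, there are at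
  most \<open>(1 - \<Prod>\<^sub>p (1 - p\<^sup>-\<^sup>2)) N/36 + O\<^sub>P(1) + N/P + \<surd>(2N)\<close> of them.  The partial Euler products
  of \<open>\<zeta>(2) = \<pi>\<^sup>2/6\<close> show that the product over \<open>5 \<le> p \<le> P\<close> is at least \<open>9/\<pi>\<^sup>2\<close>, so for
  \<open>P \<approx> 144/\<epsilon>\<close> and large \<open>x\<close> this contradicts the density \<open>1 - 9/\<pi>\<^sup>2 + \<epsilon>/100\<close> of the class \<open>u\<close>.
\<close>

subsection \<open>The Euler product for \<open>\<zeta>(2)\<close> as a lower bound\<close>

definition coprime_to_primes :: "nat set \<Rightarrow> nat set" where
  "coprime_to_primes S = {n. n \<ge> 1 \<and> (\<forall>p\<in>S. \<not> p dvd n)}"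

lemma coprime_to_primes_insert:
  assumes q: "prime q" "q \<notin> F" and F: "\<forall>p\<in>F. prime p"
  shows "(*) q ` coprime_to_primes F \<subseteq> coprime_to_primes F"
    and "coprime_to_primes (insert q F) = coprime_to_primes F - (*) q ` coprime_to_primes F"
proof -
  show "(*) q ` coprime_to_primes F \<subseteq> coprime_to_primes F"
  proof
    fix n assume "n \<in> (*) q ` coprime_to_primes F"
    then obtain m where m: "m \<in> coprime_to_primes F" "n = q * m" by auto
    have "\<not> p dvd q * m" if "p \<in> F" for p
    proof
      assume "p dvd q * m"
      hence "p dvd q \<or> p dvd m" using F that prime_dvd_mult_iff by blast
      moreover have "\<not> p dvd q" using F q that by (metis primes_dvd_imp_eq)
      ultimately show False using m that unfolding coprime_to_primes_def by auto
    qed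
    moreover have "q \<ge> 1" using q prime_gt_0_nat by (simp add: Suc_leI)
    ultimately show "n \<in> coprime_to_primes F" using m unfolding coprime_to_primes_def by auto
  qed
  have "n \<in> coprime_to_primes (insert q F)" if n: "n \<in> coprime_to_primes F"
      and not_img: "n \<notin> (*) q ` coprime_to_primes F" for n
  proof -
    have "\<not> q dvd n"
    proof
      assume "q dvd n"
      then obtain m where m: "n = q * m" by auto
      have "m \<ge> 1" using n m unfolding coprime_to_primes_def by (cases m) auto
      moreover have "\<not> p dvd m" if "p \<in> F" for p
        using n m that unfolding coprime_to_primes_def by (auto intro: dvd_mult)
      ultimately have "m \<in> coprime_to_primes F" unfolding coprime_to_primes_def by auto
      thus False using not_img m by auto
    qed
    thus ?thesis using n unfolding coprime_to_primes_def by auto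
  qed
  thus "coprime_to_primes (insert q F) = coprime_to_primes F - (*) q ` coprime_to_primes F"
    unfolding coprime_to_primes_def by auto
qed

lemma inverse_squares_has_sum_coprime_to_primes:
  assumes "finite S" "\<forall>p\<in>S. prime p"
  shows "((\<lambda>n::nat. 1 / (real n)^2) has_sum ((\<Prod>p\<in>S. 1 - 1/(real p)^2) * (pi^2/6)))
           (coprime_to_primes S)"
  using assms
proof (induction S rule: finite_induct)
  case empty
  have "((\<lambda>n::nat. 1 / (real (Suc n))^2) has_sum (pi^2/6)) UNIV"
    using sums_nonneg_imp_has_sum[OF inverse_squares_sums] by simp
  hence "((\<lambda>n::nat. 1 / (real n)^2) has_sum (pi^2/6)) (Suc ` UNIV)"
    by (subst has_sum_reindex) (auto simp: o_def)
  moreover have "Suc ` UNIV = coprime_to_primes {}"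
    by (auto simp: coprime_to_primes_def image_iff Suc_le_eq gr0_conv_Suc)
  ultimately show ?case by simp
next
  case (insert q F)
  let ?f = "\<lambda>n::nat. 1 / (real n)^2"
  define P where "P = (\<Prod>p\<in>F. 1 - 1/(real p)^2) * (pi^2/6)"
  have q: "prime q" and F: "\<forall>p\<in>F. prime p" using insert.prems by auto
  have IH: "(?f has_sum P) (coprime_to_primes F)" using insert.IH F unfolding P_def by simp
  have "((\<lambda>n. (1/(real q)^2) * ?f n) has_sum ((1/(real q)^2) * P)) (coprime_to_primes F)"
    by (rule has_sum_cmult_right[OF IH])
  hence "((?f \<circ> (*) q) has_sum ((1/(real q)^2) * P)) (coprime_to_primes F)"
    by (simp add: o_def power_mult_distrib)
  moreover have "inj_on ((*) q) (coprime_to_primes F)"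
    using q by (auto simp: inj_on_def prime_gt_0_nat)
  ultimately have multiples: "(?f has_sum ((1/(real q)^2) * P)) ((*) q ` coprime_to_primes F)"
    using has_sum_reindex by blast
  have "(?f has_sum (P - (1/(real q)^2) * P)) (coprime_to_primes (insert q F))"
    unfolding coprime_to_primes_insert(2)[OF q insert.hyps(2) F]
    by (rule has_sum_Diff[OF IH multiples coprime_to_primes_insert(1)[OF q insert.hyps(2) F]])
  moreover have "P - (1/(real q)^2) * P = (\<Prod>p\<in>insert q F. 1 - 1/(real p)^2) * (pi^2/6)"
    using insert.hyps unfolding P_def by (simp add: algebra_simps)
  ultimately show ?case by metis
qed

text \<open>Since \<open>1\<close> is coprime to everything, each partial Euler product of \<open>\<zeta>(2)\<close> is at least \<open>1\<close>.\<close>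
lemma euler_product_lower_bound:
  assumes "finite S" "\<forall>p\<in>S. prime p"
  shows "(\<Prod>p\<in>S. 1 - 1/(real p)^2) * (pi^2/6) \<ge> 1"
proof -
  have "((\<lambda>n::nat. 1 / (real n)^2) has_sum 1) {1}"
    using has_sum_finite[of "{1::nat}" "\<lambda>n::nat. 1 / (real n)^2"] by simp
  moreover have "{1} \<subseteq> coprime_to_primes S"
    using assms(2) by (auto simp: coprime_to_primes_def dest: prime_gt_1_nat)
  ultimately show ?thesis
    using has_sum_mono_neutral[OF _ inverse_squares_has_sum_coprime_to_primes[OF assms]] by force
qed

text \<open>Removing the factors for \<open>2\<close> and \<open>3\<close>: over primes \<open>p \<ge> 5\<close> the product is at least \<open>9/\<pi>\<^sup>2\<close>.\<close>
lemma prod_primes_ge_5_lower_bound: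
  assumes "finite S" "\<forall>p\<in>S. prime p \<and> p \<ge> 5"
  shows "(\<Prod>p\<in>S. 1 - 1/(real p)^2) \<ge> 9 / pi^2"
proof -
  have "2 \<notin> S" "3 \<notin> S" using assms(2) by auto
  hence split: "(\<Prod>p\<in>insert 2 (insert 3 S). 1 - 1/(real p)^2)
      = (3/4) * ((8/9) * (\<Prod>p\<in>S. 1 - 1/(real p)^2))"
    using assms(1) by simp
  have "(\<Prod>p\<in>insert 2 (insert 3 S). 1 - 1/(real p)^2) * (pi^2/6) \<ge> 1"
    by (rule euler_product_lower_bound) (use assms in auto)
  hence "(3/4) * ((8/9) * (\<Prod>p\<in>S. 1 - 1/(real p)^2)) * (pi^2/6) \<ge> 1"
    unfolding split .
  hence "(\<Prod>p\<in>S. 1 - 1/(real p)^2) * pi^2 \<ge> 9" by (simp add: field_simps)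
  thus ?thesis by (simp add: field_simps)
qed

subsection \<open>Counting in arithmetic progressions\<close>

lemma card_residue_class_in_block:
  assumes m: "(m::nat) > 0" and s: "s < m"
  shows "card {n \<in> {c..<c+m}. n mod m = s} = 1"
proof -
  have inj: "inj_on (\<lambda>n. n mod m) {c..<c+m}"
  proof (rule inj_onI)
    fix x y assume xy: "x \<in> {c..<c+m}" "y \<in> {c..<c+m}" "x mod m = y mod m"
    have "x = y" if "x < y" "x mod m = y mod m" "y < x + m" for x y
    proof -
      have "m dvd y - x" using that mod_eq_dvd_iff_nat[of x y m] by simp
      moreover have "0 < y - x" "y - x < m" using that(1,3) by auto
      ultimately show "x = y" by (meson nat_dvd_not_less)
    qed
    moreover have "x < y + m" "y < x + m" using xy(1,2) by auto
    ultimately show "x = y" using xy(3) by (metis linorder_neqE_nat)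
  qed
  have "(\<lambda>n. n mod m) ` {c..<c+m} \<subseteq> {..<m}" using m by auto
  moreover have "card ((\<lambda>n. n mod m) ` {c..<c+m}) = card {..<m}"
    using card_image[OF inj] by simp
  ultimately have "(\<lambda>n. n mod m) ` {c..<c+m} = {..<m}"
    by (intro card_subset_eq) auto
  then obtain n0 where n0: "n0 \<in> {c..<c+m}" "n0 mod m = s" using s
    by (metis imageE lessThan_iff)
  have "{n \<in> {c..<c+m}. n mod m = s} = {n0}"
    using n0 inj unfolding inj_on_def by auto
  thus ?thesis by simp
qed

lemma card_residue_class_in_interval:
  assumes m: "(m::nat) > 0"
  shows "\<bar>real (card {n \<in> {b<..b+N}. n mod m = r mod m}) - real N / real m\<bar> \<le> 1"
proof (induction N rule: less_induct)
  case (less N)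
  define count where "count N = card {n \<in> {b<..b+N}. n mod m = r mod m}" for N
  have rm: "r mod m < m" using m by simp
  show ?case
  proof (cases "N < m")
    case True
    have "{n \<in> {b<..b+N}. n mod m = r mod m} \<subseteq> {n \<in> {b+1..<b+1+m}. n mod m = r mod m}"
      using True by auto
    hence "count N \<le> card {n \<in> {b+1..<b+1+m}. n mod m = r mod m}" unfolding count_def
      by (intro card_mono) auto
    hence "count N \<le> 1" using card_residue_class_in_block[OF m rm, of "b+1"] by simp
    moreover have "0 \<le> real N / real m" "real N / real m < 1" using True m by auto
    ultimately show ?thesis unfolding count_def by (smt (verit) of_nat_le_1_iff of_nat_0_le_iff)
  next
    case False
    then obtain N' where N': "N = N' + m" by (metis add.commute le_Suc_ex not_less)
    have split: "{n \<in> {b<..b+N}. n mod m = r mod m}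
        = {n \<in> {b<..b+N'}. n mod m = r mod m} \<union> {n \<in> {b+N'+1..<b+N'+1+m}. n mod m = r mod m}"
      using N' by auto
    have "count N = count N' + card {n \<in> {b+N'+1..<b+N'+1+m}. n mod m = r mod m}"
      unfolding count_def split by (rule card_Un_disjoint) auto
    hence "count N = count N' + 1" using card_residue_class_in_block[OF m rm, of "b+N'+1"] by simp
    moreover have "real N / real m = real N' / real m + 1" using N' m by (simp add: field_simps)
    moreover have "\<bar>real (count N') - real N' / real m\<bar> \<le> 1"
      using less[of N'] N' m unfolding count_def by simp
    ultimately show ?thesis unfolding count_def by simp
  qed
qed

lemma residue_class_and_multiples:
  fixes m k r :: nat
  assumes coprime: "coprime m k"
  obtains r' where "\<And>n. (n mod m = r mod m \<and> k dvd n) \<longleftrightarrow> n mod (m * k) = r' mod (m * k)"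
proof -
  obtain r' where r': "[r' = r] (mod m)" "[r' = 0] (mod k)"
    using binary_chinese_remainder_nat[OF coprime] by blast
  have "(n mod m = r mod m \<and> k dvd n) \<longleftrightarrow> [n = r'] (mod m) \<and> [n = r'] (mod k)" for n
    using r' unfolding cong_def by (auto simp: dvd_eq_mod_eq_0)
  also have "([n = r'] (mod m) \<and> [n = r'] (mod k)) \<longleftrightarrow> [n = r'] (mod m * k)" for n
    using coprime_cong_mult_nat[OF _ _ coprime] cong_modulus_mult_nat[of n r' m k]
      cong_modulus_mult_nat[of n r' k m] by (auto simp: mult.commute)
  finally show ?thesis using that unfolding cong_def by blast
qed

definition sifted :: "nat \<Rightarrow> nat \<Rightarrow> nat \<Rightarrow> nat \<Rightarrow> nat set \<Rightarrow> nat set" where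
  "sifted b N m r S = {n\<in>{b<..b+N}. n mod m = r mod m \<and> (\<forall>p\<in>S. \<not> p^2 dvd n)}"

text \<open>Sifting by one more prime \<open>q\<close>
  removes a sifted class modulo \<open>m q\<^sup>2\<close>, which is where the modulus has to vary.\<close>
lemma card_sifted:
  assumes "finite S" "\<forall>p\<in>S. prime p" "m > 0" "\<forall>p\<in>S. coprime m p"
  shows "\<bar>real (card (sifted b N m r S)) - real N / real m * (\<Prod>p\<in>S. 1 - 1/(real p)^2)\<bar>
           \<le> 2 ^ card S"
  using assms
proof (induction S arbitrary: m r rule: finite_induct)
  case empty
  show ?case using card_residue_class_in_interval[OF empty.prems(2)] by (simp add: sifted_def)
next
  case (insert q F)
  have q: "prime q" and F: "\<forall>p\<in>F. prime p" using insert.prems(1) by auto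
  have m: "m > 0" and cop_m: "\<forall>p\<in>F. coprime m p" "coprime m (q^2)" using insert.prems by auto
  obtain r' where r': "\<And>n. (n mod m = r mod m \<and> q^2 dvd n) \<longleftrightarrow> n mod (m * q^2) = r' mod (m * q^2)"
    using residue_class_and_multiples[OF cop_m(2)] by blast
  define PF where "PF = (\<Prod>p\<in>F. 1 - 1/(real p)^2)"
  have removed: "sifted b N (m * q^2) r' F \<subseteq> sifted b N m r F"
    unfolding sifted_def using r' by auto
  have split: "sifted b N m r (insert q F) = sifted b N m r F - sifted b N (m * q^2) r' F"
    unfolding sifted_def using r' by auto
  have fin: "finite (sifted b N m r F)" by (simp add: sifted_def)
  have "real (card (sifted b N m r (insert q F)))
      = real (card (sifted b N m r F)) - real (card (sifted b N (m * q^2) r' F))"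
    unfolding split using card_Diff_subset[OF finite_subset[OF removed fin] removed]
      card_mono[OF fin removed] by (simp add: of_nat_diff)
  moreover have "\<bar>real (card (sifted b N m r F)) - real N / real m * PF\<bar> \<le> 2 ^ card F"
    using insert.IH[OF F m cop_m(1)] unfolding PF_def .
  moreover have "\<bar>real (card (sifted b N (m * q^2) r' F)) - real N / real (m * q^2) * PF\<bar> \<le> 2 ^ card F"
  proof -
    have "coprime (m * q^2) p" if "p \<in> F" for p
    proof -
      have "coprime q p" by (rule primes_coprime) (use q F insert.hyps(2) that in auto)
      thus ?thesis using cop_m(1) that by simp
    qed
    moreover have "m * q^2 > 0" using m q by (simp add: prime_gt_0_nat)
    ultimately show ?thesis using insert.IH[OF F] unfolding PF_def by blast
  qed
  moreover have "real N / real m * (\<Prod>p\<in>insert q F. 1 - 1/(real p)^2)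
      = real N / real m * PF - real N / real (m * q^2) * PF"
    using insert.hyps m q unfolding PF_def by (simp add: field_simps)
  moreover have "(2::real) ^ card (insert q F) = 2 ^ card F + 2 ^ card F" using insert.hyps by simp
  ultimately show ?case unfolding abs_le_iff by linarith
qed

text \<open>Tail of \<open>\<Sum> d\<^sup>-\<^sup>2\<close>, by telescoping \<open>1/d\<^sup>2 \<le> 1/(d - 1) - 1/d\<close>.\<close>
lemma inverse_squares_tail_bound:
  assumes "(P::nat) \<ge> 1"
  shows "(\<Sum>d\<in>{P<..K}. 1 / (real d)^2) \<le> 1 / real P"
proof -
  have telescope: "(\<Sum>d\<in>{P<..K}. 1 / (real d)^2) \<le> 1 / real P - 1 / real K" if "K \<ge> P" for K
    using that
  proof (induction K rule: dec_induct)
    case base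
    then show ?case by simp
  next
    case (step K)
    have K1: "real K \<ge> 1" using step assms by simp
    have "{P<..Suc K} = insert (Suc K) {P<..K}" using step by auto
    hence "(\<Sum>d\<in>{P<..Suc K}. 1 / (real d)^2) = 1 / (real (Suc K))^2 + (\<Sum>d\<in>{P<..K}. 1 / (real d)^2)"
      by simp
    moreover have "1 / (real (Suc K))^2 \<le> 1 / (real K * real (Suc K))"
      using K1 by (intro divide_left_mono) (auto simp: power2_eq_square)
    moreover have "1 / (real K * real (Suc K)) = 1 / real K - 1 / real (Suc K)"
      using K1 by (simp add: field_simps)
    ultimately show ?case using step.IH by linarith
  qed
  show ?thesis
  proof (cases "K \<ge> P")
    case True
    have "0 \<le> 1 / real K" by simp
    thus ?thesis using telescope[OF True] by linarith
  qed simp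
qed

subsection \<open>Non-squarefree numbers in a progression modulo 36\<close>

lemma nonsquarefree_prime_square_ge_5:
  fixes n r :: nat
  assumes "n \<noteq> 0" "\<not> squarefree n" "n mod 36 = r mod 36" "\<not> 4 dvd r" "\<not> 9 dvd r"
  obtains p where "prime p" "p \<ge> 5" "p^2 dvd n"
proof -
  obtain p where p: "prime p" "p^2 dvd n"
    using assms(1,2) squarefree_factorial_semiring by blast
  have same_divisors: "d dvd n \<longleftrightarrow> d dvd r" if "d dvd 36" for d :: nat
  proof -
    have "n mod d = r mod d" using assms(3) mod_mod_cancel[OF that] by metis
    thus ?thesis by (simp add: dvd_eq_mod_eq_0)
  qed
  have "p \<noteq> 2" using p(2) same_divisors[of 4] assms(4) by auto
  moreover have "p \<noteq> 3" using p(2) same_divisors[of 9] assms(5) by auto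
  moreover have "p \<noteq> 4" using p(1) prime_product[of 2 2] by auto
  ultimately have "p \<ge> 5" using prime_ge_2_nat[OF p(1)] by linarith
  with p show ?thesis using that by blast
qed

lemma nonsquarefree_in_progression_cover:
  fixes n r b N P :: nat
  assumes "n \<in> {b<..b+N}" "b \<le> N" "n mod 36 = r mod 36" "\<not> 4 dvd r" "\<not> 9 dvd r"
    and "\<not> squarefree n"
  shows "(\<exists>p. prime p \<and> 5 \<le> p \<and> p \<le> P \<and> p^2 dvd n)
       \<or> (\<exists>d\<in>{P<..nat \<lfloor>sqrt (2 * real N)\<rfloor>}. d^2 dvd n)"
proof -
  have n0: "n \<noteq> 0" using assms(1) by auto
  obtain p where p: "prime p" "p \<ge> 5" "p^2 dvd n"
    using nonsquarefree_prime_square_ge_5[OF n0 assms(6,3,4,5)] .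
  show ?thesis
  proof (cases "p \<le> P")
    case False
    have "p^2 \<le> 2 * N" using dvd_imp_le[OF p(3)] n0 assms(1,2) by auto
    hence "real p ^ 2 \<le> 2 * real N" by (metis of_nat_le_iff of_nat_mult of_nat_numeral of_nat_power)
    hence "p \<le> nat \<lfloor>sqrt (2 * real N)\<rfloor>" by (simp add: le_nat_floor real_le_rsqrt)
    thus ?thesis using False p(3) by auto
  qed (use p in auto)
qed

lemma card_multiples_of_large_squares:
  fixes P K b N :: nat
  assumes "P \<ge> 1"
  shows "(\<Sum>d\<in>{P<..K}. real (card {n\<in>{b<..b+N}. d^2 dvd n})) \<le> real N / real P + real K"
proof -
  have "real (card {n\<in>{b<..b+N}. d^2 dvd n}) \<le> real N / (real d)^2 + 1" if "d \<in> {P<..K}" for d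
  proof -
    have "d^2 > 0" using that by simp
    from card_residue_class_in_interval[OF this, of b N 0] show ?thesis
      by (simp add: dvd_eq_mod_eq_0)
  qed
  hence "(\<Sum>d\<in>{P<..K}. real (card {n\<in>{b<..b+N}. d^2 dvd n}))
      \<le> (\<Sum>d\<in>{P<..K}. real N / (real d)^2 + 1)"
    by (rule sum_mono)
  also have "\<dots> = real N * (\<Sum>d\<in>{P<..K}. 1 / (real d)^2) + real (card {P<..K})"
    by (simp add: sum.distrib sum_distrib_left)
  also have "\<dots> \<le> real N * (1 / real P) + real K"
    using mult_left_mono[OF inverse_squares_tail_bound[OF assms, of K]] by (intro add_mono) auto
  finally show ?thesis by simp
qed

lemma prime_ge_5_coprime_36:
  assumes "prime (p::nat)" "p \<ge> 5"
  shows "coprime 36 p"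
proof -
  have "coprime 2 p" by (rule primes_coprime) (use assms in auto)
  moreover have "coprime 3 p" by (rule primes_coprime) (use assms in auto)
  ultimately have "coprime (2^2 * 3^2) p"
    by (simp only: coprime_mult_left_iff coprime_power_left_iff) simp
  thus ?thesis by simp
qed

text \<open>Upper bound for the non-squarefree numbers of \<open>(b, b + N]\<close> in a progression \<open>r\<close> modulo 36 with
  \<open>4 \<nmid> r\<close>, \<open>9 \<nmid> r\<close>: by the cover above they lie in the progression minus its sifted part, or among the
  multiples of large squares.\<close>
lemma card_nonsquarefree_in_progression:
  fixes r b N P :: nat
  assumes r: "\<not> 4 dvd r" "\<not> 9 dvd r" and P: "P \<ge> 1" and bN: "b \<le> N"
  defines "S \<equiv> {p. prime p \<and> 5 \<le> p \<and> p \<le> P}"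
  shows "real (card {n\<in>{b<..b+N}. n mod 36 = r mod 36 \<and> \<not> squarefree n})
     \<le> real N / 36 * (1 - (\<Prod>p\<in>S. 1 - 1/(real p)^2)) + 1 + 2 ^ card S
        + real N / real P + sqrt (2 * real N)"
proof -
  define K where "K = nat \<lfloor>sqrt (2 * real N)\<rfloor>"
  define progression where "progression = {n\<in>{b<..b+N}. n mod 36 = r mod 36}"
  define E where "E d = {n\<in>{b<..b+N}. d^2 dvd n}" for d :: nat
  have S: "finite S" "\<forall>p\<in>S. prime p" "\<forall>p\<in>S. coprime 36 p"
    unfolding S_def by (auto intro: prime_ge_5_coprime_36)
  have fin: "finite progression" "\<And>d. finite (E d)" unfolding progression_def E_def by auto
  have "{n\<in>{b<..b+N}. n mod 36 = r mod 36 \<and> \<not> squarefree n}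
      \<subseteq> (progression - sifted b N 36 r S) \<union> (\<Union>d\<in>{P<..K}. E d)"
    using nonsquarefree_in_progression_cover[OF _ bN _ r]
    unfolding progression_def sifted_def E_def K_def S_def by blast
  hence "card {n\<in>{b<..b+N}. n mod 36 = r mod 36 \<and> \<not> squarefree n}
      \<le> card ((progression - sifted b N 36 r S) \<union> (\<Union>d\<in>{P<..K}. E d))"
    using fin by (intro card_mono) auto
  also have "\<dots> \<le> card (progression - sifted b N 36 r S) + card (\<Union>d\<in>{P<..K}. E d)"
    by (rule card_Un_le)
  also have "\<dots> \<le> card (progression - sifted b N 36 r S) + (\<Sum>d\<in>{P<..K}. card (E d))"
    using fin by (intro add_left_mono card_UN_le) auto
  finally have "real (card {n\<in>{b<..b+N}. n mod 36 = r mod 36 \<and> \<not> squarefree n})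
      \<le> real (card (progression - sifted b N 36 r S)) + (\<Sum>d\<in>{P<..K}. real (card (E d)))"
    by (auto dest: of_nat_mono[where 'a = real])
  moreover have "real (card (progression - sifted b N 36 r S))
      = real (card progression) - real (card (sifted b N 36 r S))"
  proof -
    have sub: "sifted b N 36 r S \<subseteq> progression" unfolding sifted_def progression_def by auto
    show ?thesis using card_Diff_subset[OF finite_subset[OF sub fin(1)] sub] card_mono[OF fin(1) sub]
      by (simp add: of_nat_diff)
  qed
  moreover have "\<bar>real (card progression) - real N / 36\<bar> \<le> 1"
    using card_residue_class_in_interval[of 36 b N r] unfolding progression_def by simp
  moreover have "\<bar>real (card (sifted b N 36 r S)) - real N / 36 * (\<Prod>p\<in>S. 1 - 1/(real p)^2)\<bar>
      \<le> 2 ^ card S"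
    using card_sifted[OF S(1,2) _ S(3), of b N r] by simp
  moreover have "(\<Sum>d\<in>{P<..K}. real (card (E d))) \<le> real N / real P + real K"
    unfolding E_def by (rule card_multiples_of_large_squares[OF P])
  moreover have "real K \<le> sqrt (2 * real N)" unfolding K_def by simp
  ultimately show ?thesis unfolding abs_le_iff by (simp add: algebra_simps)
qed

lemma sqrt_le_linear:
  fixes c x :: real
  assumes "c > 0" "x \<ge> 2 / c^2"
  shows "sqrt (2 * x) \<le> c * x"
proof -
  have x: "x > 0" using assms by (smt (verit) divide_pos_pos zero_less_power)
  have "c^2 * x \<ge> 2" using assms by (simp add: field_simps)
  hence "2 * x \<le> (c * x)^2" using x by (simp add: power2_eq_square algebra_simps mult_right_mono)
  hence "sqrt (2 * x) \<le> sqrt ((c * x)^2)" by (rule real_sqrt_le_mono)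
  thus ?thesis using assms(1) x by simp
qed

text \<open>For large \<open>x\<close>, an interval \<open>(b, b + N]\<close> with \<open>b \<le> N \<le> x\<close> contains at most
  \<open>(1 - 9/\<pi>\<^sup>2 + \<eta>) x/36\<close> non-squarefree numbers \<open>\<equiv> r (mod 36)\<close> when \<open>4 \<nmid> r\<close>, \<open>9 \<nmid> r\<close>.
  The sieve is run up to \<open>P \<approx> 144/\<eta>\<close>; its error term \<open>1 + 2\<^bsup>|S|\<^esup>\<close> is then a constant.\<close>
lemma nonsquarefree_in_progression_eventually:
  fixes \<eta> :: real
  assumes \<eta>: "\<eta> > 0"
  obtains x0 where "x0 > 0"
    and "\<And>x N b r. x \<ge> x0 \<Longrightarrow> real N \<le> x \<Longrightarrow> b \<le> N \<Longrightarrow> \<not> 4 dvd r \<Longrightarrow> \<not> 9 dvd r \<Longrightarrow>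
           real (card {n\<in>{b<..b+N}. n mod 36 = r mod 36 \<and> \<not> squarefree n}) \<le> (1 - 9/pi^2 + \<eta>) * x / 36"
proof -
  define P :: nat where "P = nat \<lceil>144 / \<eta>\<rceil> + 1"
  define S where "S = {p. prime p \<and> 5 \<le> p \<and> p \<le> P}"
  define C :: real where "C = 1 + 2 ^ card S"
  define x0 where "x0 = 144 * C / \<eta> + 2 / (\<eta> / 72)^2"
  have P: "P \<ge> 1" "1 / real P \<le> \<eta> / 144"
  proof -
    show "P \<ge> 1" unfolding P_def by simp
    moreover have "real P \<ge> 144 / \<eta>" unfolding P_def by linarith
    ultimately show "1 / real P \<le> \<eta> / 144" using \<eta> by (simp add: field_simps)
  qed
  have "finite S" "\<forall>p\<in>S. prime p \<and> p \<ge> 5" unfolding S_def by auto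
  hence prod: "9 / pi^2 \<le> (\<Prod>p\<in>S. 1 - 1/(real p)^2)"
    by (rule prod_primes_ge_5_lower_bound)
  have prod_le: "(\<Prod>p\<in>S. 1 - 1/(real p)^2) \<le> 1"
    by (rule prod_le_1) (auto simp: S_def)
  have C_pos: "C > 0" unfolding C_def by (simp add: add_pos_nonneg)
  hence x0: "x0 > 0" unfolding x0_def using \<eta> by (intro add_pos_pos divide_pos_pos) auto
  show ?thesis
  proof (rule that[OF x0])
    fix x N b r
    assume x: "x \<ge> x0" and N: "real N \<le> x" and bN: "b \<le> N" and r: "\<not> 4 dvd (r::nat)" "\<not> 9 dvd r"
    have "144 * C / \<eta> \<ge> 0" "2 / (\<eta> / 72)^2 \<ge> 0" using \<eta> C_pos by auto
    hence "x \<ge> 144 * C / \<eta>" "x \<ge> 2 / (\<eta> / 72)^2" using x unfolding x0_def by linarith+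
    hence C: "C \<le> \<eta> * x / 144" and sqrt_x: "sqrt (2 * x) \<le> \<eta> / 72 * x"
      using \<eta> sqrt_le_linear[of "\<eta> / 72" x] by (auto simp: field_simps)
    have sifted_term: "real N / 36 * (1 - (\<Prod>p\<in>S. 1 - 1/(real p)^2)) \<le> x / 36 * (1 - 9 / pi^2)"
      using N prod prod_le by (intro mult_mono) auto
    have tail_term: "real N / real P \<le> \<eta> * x / 144"
      using mult_mono[OF N P(2)] N by (simp add: mult.commute)
    have "sqrt (2 * real N) \<le> sqrt (2 * x)" using N by simp
    hence "real (card {n\<in>{b<..b+N}. n mod 36 = r mod 36 \<and> \<not> squarefree n})
        \<le> x / 36 * (1 - 9 / pi^2) + \<eta> * x / 144 + \<eta> * x / 144 + \<eta> / 72 * x"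
      using card_nonsquarefree_in_progression[OF r P(1) bN] sifted_term tail_term C sqrt_x
      unfolding S_def[symmetric] C_def by linarith
    also have "\<dots> = (1 - 9/pi^2 + \<eta>) * x / 36" by (simp add: algebra_simps)
    finally show "real (card {n\<in>{b<..b+N}. n mod 36 = r mod 36 \<and> \<not> squarefree n})
        \<le> (1 - 9/pi^2 + \<eta>) * x / 36" .
  qed
qed

subsection \<open>The sumset argument\<close>

lemma card_class_le_nonsquarefree_translates:
  fixes A :: "nat set" and m u b N :: nat
  assumes A: "A \<subseteq> {1..N}" "b \<in> A" and nonsq: "\<forall>a\<in>A. \<forall>a'\<in>A. \<not> squarefree (a + a')"
  shows "card {a\<in>A. a mod m = u} \<le> card {n\<in>{b<..b+N}. n mod m = (u + b) mod m \<and> \<not> squarefree n}"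
proof (rule card_inj_on_le)
  show "inj_on (\<lambda>a. a + b) {a\<in>A. a mod m = u}" by (simp add: inj_on_def)
  show "(\<lambda>a. a + b) ` {a\<in>A. a mod m = u} \<subseteq> {n\<in>{b<..b+N}. n mod m = (u + b) mod m \<and> \<not> squarefree n}"
    using A nonsq by (auto simp: mod_add_left_eq)
qed simp

lemma Qset_iff:
  assumes "r < 36"
  shows "r \<in> Qset \<longleftrightarrow> 4 dvd r \<or> 9 dvd r"
proof
  show "r \<in> Qset \<Longrightarrow> 4 dvd r \<or> 9 dvd r" by (auto simp: Qset_def)
  show "4 dvd r \<or> 9 dvd r \<Longrightarrow> r \<in> Qset"
    using assms unfolding Qset_def insert_iff empty_iff by (elim disjE; presburger)
qed

lemma class_translate_in_Qset:
  fixes A :: "nat set" and N b u :: nat and B :: real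
  assumes A: "A \<subseteq> {1..N}" "b \<in> A" and nonsq: "\<forall>a\<in>A. \<forall>a'\<in>A. \<not> squarefree (a + a')"
    and large: "real (card {a\<in>A. a mod 36 = u}) > B"
    and sparse: "\<And>r. \<not> 4 dvd r \<Longrightarrow> \<not> 9 dvd r \<Longrightarrow>
                   real (card {n\<in>{b<..b+N}. n mod 36 = r mod 36 \<and> \<not> squarefree n}) \<le> B"
  shows "(u + b) mod 36 \<in> Qset"
proof (rule ccontr)
  assume "(u + b) mod 36 \<notin> Qset"
  hence "\<not> 4 dvd (u + b) mod 36" "\<not> 9 dvd (u + b) mod 36"
    using Qset_iff[of "(u + b) mod 36"] by auto
  hence "real (card {n\<in>{b<..b+N}. n mod 36 = (u + b) mod 36 \<and> \<not> squarefree n}) \<le> B"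
    using sparse by fastforce
  moreover have "card {a\<in>A. a mod 36 = u}
      \<le> card {n\<in>{b<..b+N}. n mod 36 = (u + b) mod 36 \<and> \<not> squarefree n}"
    by (rule card_class_le_nonsquarefree_translates[OF A nonsq])
  ultimately show False using large by linarith
qed

theorem lemma1:
  fixes \<epsilon> :: real
  assumes "\<epsilon> > 0"
  shows "\<exists>x0. \<forall>x \<ge> x0. \<forall>A :: nat set.
    A \<subseteq> {n. 1 \<le> n \<and> real n \<le> x} \<longrightarrow>
    real (card A) > (delta0 + \<epsilon>) * x \<longrightarrow>
    (\<forall>a\<in>A. \<forall>b\<in>A. \<not> squarefree (a + b)) \<longrightarrow>
    \<not> A \<subseteq> {n. 4 dvd n} \<longrightarrow>
    \<not> A \<subseteq> {n. 9 dvd n} \<longrightarrow>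
    \<not> A \<subseteq> {n. n mod 4 = 2} \<longrightarrow>
    (\<forall>u\<in>Uset \<epsilon> x A. \<forall>v\<in>Vset x A. (u + v) mod 36 \<in> Qset)"
proof -
  obtain x0 where x0: "x0 > 0" and sparse: "\<And>x N b r. x \<ge> x0 \<Longrightarrow> real N \<le> x \<Longrightarrow> b \<le> N \<Longrightarrow>
      \<not> 4 dvd r \<Longrightarrow> \<not> 9 dvd r \<Longrightarrow> real (card {n\<in>{b<..b+N}. n mod 36 = r mod 36 \<and> \<not> squarefree n})
        \<le> (1 - 9/pi^2 + \<epsilon> / 100) * x / 36"
    using nonsquarefree_in_progression_eventually[of "\<epsilon> / 100"] assms by auto
  show ?thesis
  proof (intro exI[of _ x0] allI impI ballI)
    fix x :: real and A :: "nat set" and u v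
    assume x: "x \<ge> x0" and A: "A \<subseteq> {n. 1 \<le> n \<and> real n \<le> x}"
      and nonsq: "\<forall>a\<in>A. \<forall>b\<in>A. \<not> squarefree (a + b)"
      and u: "u \<in> Uset \<epsilon> x A" and v: "v \<in> Vset x A"
    define N where "N = nat \<lfloor>x\<rfloor>"
    have x_pos: "x > 0" and N: "real N \<le> x" using x x0 unfolding N_def by linarith+
    have AN: "A \<subseteq> {1..N}" using A unfolding N_def by (auto simp: le_nat_floor)
    have "card {n \<in> A. n mod 36 = v} > 0"
      using v x_pos unfolding Vset_def dens_def by (simp add: zero_less_divide_iff)
    then obtain b where b: "b \<in> A" "b mod 36 = v" by (auto simp: card_gt_0_iff)
    have "(u + b) mod 36 \<in> Qset"
    proof (rule class_translate_in_Qset[OF AN b(1) nonsq])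
      show "(1 - 9/pi^2 + \<epsilon> / 100) * x / 36 < real (card {a \<in> A. a mod 36 = u})"
        using u x_pos unfolding Uset_def dens_def by (simp add: field_simps)
    qed (use sparse[OF x N] b(1) AN in auto)
    thus "(u + v) mod 36 \<in> Qset" using b(2) by (metis mod_add_right_eq)
  qed
qed

end
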